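(* Let $G$ be a pronilpotent group generated (topologically) by closed subgroups $G_1,\dots,G_t$ such that for every $i\geq1$ the closed subgroup $\gamma_i(G)$ is generated by the subgroups $\gamma_i(G)\cap G_j$, $1\leq j\leq t$. Then $G=G_1G_2\cdots G_t$.
   Context: In a profinite group, $\gamma_1(G)=G$ and $\gamma_i(G)$ is the closed subgroup generated by all commutators $[x,g]$ with $x\in\gamma_{i-1}(G)$, $g\in G$. A pronilpotent group is an inverse limit of finite nilpotent groups. *)

theory Defs
  imports "HOL-Analysis.Analysis" "HOL-Algebra.Algebra"
begin

definition commutator :: "('a, 'm) monoid_scheme \<Rightarrow> 'a \<Rightarrow> 'a \<Rightarrow> 'a" where
  "commutator G x g = inv\<^bsub>G\<^esub> x \<otimes>\<^bsub>G\<^esub> inv\<^bsub>G\<^esub> g \<otimes>\<^bsub>G\<^esub> x \<otimes>\<^bsub>G\<^esub> g"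

definition comm_set :: "('a, 'm) monoid_scheme \<Rightarrow> 'a set \<Rightarrow> 'a set" where
  "comm_set G A = {commutator G x g | x g. x \<in> A \<and> g \<in> carrier G}"

text \<open>Lower central series of an abstract group: gamma 1 = G,
  gamma (i+1) = subgroup generated by [gamma i, G].  (Index 0 is a dummy equal to G.)\<close>
fun lcs :: "('a, 'm) monoid_scheme \<Rightarrow> nat \<Rightarrow> 'a set" where
  "lcs G 0 = carrier G"
| "lcs G (Suc 0) = carrier G"
| "lcs G (Suc (Suc n)) = generate G (comm_set G (lcs G (Suc n)))"

definition nilpotent_group :: "('a, 'm) monoid_scheme \<Rightarrow> bool" where
  "nilpotent_group G \<longleftrightarrow> group G \<and> (\<exists>n\<ge>1. lcs G n = {\<one>\<^bsub>G\<^esub>})"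

definition topological_group :: "('a, 'm) monoid_scheme \<Rightarrow> 'a topology \<Rightarrow> bool" where
  "topological_group G T \<longleftrightarrow> group G \<and> topspace T = carrier G \<and>
     continuous_map (prod_topology T T) T (\<lambda>(x, y). x \<otimes>\<^bsub>G\<^esub> y) \<and>
     continuous_map T T (\<lambda>x. inv\<^bsub>G\<^esub> x)"

definition closed_subgroup :: "('a, 'm) monoid_scheme \<Rightarrow> 'a topology \<Rightarrow> 'a set \<Rightarrow> bool" where
  "closed_subgroup G T H \<longleftrightarrow> subgroup H G \<and> closedin T H"

definition closed_generate :: "('a, 'm) monoid_scheme \<Rightarrow> 'a topology \<Rightarrow> 'a set \<Rightarrow> 'a set" where
  "closed_generate G T S = \<Inter> {H. closed_subgroup G T H \<and> S \<subseteq> H}"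

text \<open>Lower central series of a topological group: gamma 1 = G, gamma (i+1) = closed subgroup
  generated by all [x,g] with x in gamma i, g in G.  (Index 0 is a dummy equal to G.)\<close>
fun tlcs :: "('a, 'm) monoid_scheme \<Rightarrow> 'a topology \<Rightarrow> nat \<Rightarrow> 'a set" where
  "tlcs G T 0 = carrier G"
| "tlcs G T (Suc 0) = carrier G"
| "tlcs G T (Suc (Suc n)) = closed_generate G T (comm_set G (tlcs G T (Suc n)))"

definition finite_nilpotent_inverse_system ::
  "'i set \<Rightarrow> ('i \<Rightarrow> 'i \<Rightarrow> bool) \<Rightarrow> ('i \<Rightarrow> 'b monoid) \<Rightarrow> ('i \<Rightarrow> 'i \<Rightarrow> 'b \<Rightarrow> 'b) \<Rightarrow> bool" where
  "finite_nilpotent_inverse_system I rel H \<phi> \<longleftrightarrow>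
     I \<noteq> {} \<and>
     (\<forall>i\<in>I. rel i i) \<and>
     (\<forall>i\<in>I. \<forall>j\<in>I. \<forall>k\<in>I. rel i j \<and> rel j k \<longrightarrow> rel i k) \<and>
     (\<forall>i\<in>I. \<forall>j\<in>I. \<exists>k\<in>I. rel i k \<and> rel j k) \<and>
     (\<forall>i\<in>I. group (H i) \<and> finite (carrier (H i)) \<and> nilpotent_group (H i)) \<and>
     (\<forall>i\<in>I. \<forall>j\<in>I. rel i j \<longrightarrow> \<phi> i j \<in> hom (H j) (H i)) \<and>
     (\<forall>i\<in>I. \<forall>x\<in>carrier (H i). \<phi> i i x = x) \<and>
     (\<forall>i\<in>I. \<forall>j\<in>I. \<forall>k\<in>I. rel i j \<and> rel j k \<longrightarrow>
        (\<forall>x\<in>carrier (H k). \<phi> i j (\<phi> j k x) = \<phi> i k x))"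

definition inv_lim_carrier ::
  "'i set \<Rightarrow> ('i \<Rightarrow> 'i \<Rightarrow> bool) \<Rightarrow> ('i \<Rightarrow> 'b monoid) \<Rightarrow> ('i \<Rightarrow> 'i \<Rightarrow> 'b \<Rightarrow> 'b) \<Rightarrow> ('i \<Rightarrow> 'b) set" where
  "inv_lim_carrier I rel H \<phi> =
     {x \<in> (\<Pi>\<^sub>E i\<in>I. carrier (H i)). \<forall>i\<in>I. \<forall>j\<in>I. rel i j \<longrightarrow> \<phi> i j (x j) = x i}"

definition inv_lim_topology ::
  "'i set \<Rightarrow> ('i \<Rightarrow> 'i \<Rightarrow> bool) \<Rightarrow> ('i \<Rightarrow> 'b monoid) \<Rightarrow> ('i \<Rightarrow> 'i \<Rightarrow> 'b \<Rightarrow> 'b) \<Rightarrow> ('i \<Rightarrow> 'b) topology" where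
  "inv_lim_topology I rel H \<phi> =
     subtopology (product_topology (\<lambda>i. discrete_topology (carrier (H i))) I) (inv_lim_carrier I rel H \<phi>)"

definition is_inverse_limit ::
  "('a, 'm) monoid_scheme \<Rightarrow> 'a topology \<Rightarrow>
   'i set \<Rightarrow> ('i \<Rightarrow> 'i \<Rightarrow> bool) \<Rightarrow> ('i \<Rightarrow> 'b monoid) \<Rightarrow> ('i \<Rightarrow> 'i \<Rightarrow> 'b \<Rightarrow> 'b) \<Rightarrow> bool" where
  "is_inverse_limit G T I rel H \<phi> \<longleftrightarrow>
     (\<exists>f. bij_betw f (carrier G) (inv_lim_carrier I rel H \<phi>) \<and>
          (\<forall>x\<in>carrier G. \<forall>y\<in>carrier G.
              f (x \<otimes>\<^bsub>G\<^esub> y) = (\<lambda>i\<in>I. f x i \<otimes>\<^bsub>H i\<^esub> f y i)) \<and>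
          homeomorphic_map T (inv_lim_topology I rel H \<phi>) f)"

text \<open>The index type 'i and the element type 'b of the finite groups
  are extra parameters (they are universally quantified type variables in any theorem).\<close>
definition pronilpotent ::
  "('a, 'm) monoid_scheme \<Rightarrow> 'a topology \<Rightarrow> 'i itself \<Rightarrow> 'b itself \<Rightarrow> bool" where
  "pronilpotent G T _ _ \<longleftrightarrow> topological_group G T \<and>
     (\<exists>(I::'i set) rel (H::'i \<Rightarrow> 'b monoid) \<phi>.
        finite_nilpotent_inverse_system I rel H \<phi> \<and> is_inverse_limit G T I rel H \<phi>)"

fun ordered_set_prod :: "('a, 'm) monoid_scheme \<Rightarrow> (nat \<Rightarrow> 'a set) \<Rightarrow> nat \<Rightarrow> 'a set" where
  "ordered_set_prod G Gs 0 = {\<one>\<^bsub>G\<^esub>}"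
| "ordered_set_prod G Gs (Suc k) = ordered_set_prod G Gs k <#>\<^bsub>G\<^esub> Gs (Suc k)"

end

theory Submission
  imports Defs
begin

text \<open>
  Write P = G(1) G(2) \<dots> G(t) and \<gamma>(n) for the closed lower central series. The set P is
  compact, hence closed. The kernels K of the projections of G onto the finite nilpotent groups
  of the inverse system are open normal subgroups forming a neighbourhood basis of 1, and each
  contains some \<gamma>(c); as P is closed it therefore suffices to show G = P \<gamma>(n) K for all n.
  Modulo M = \<gamma>(n+1) K the subgroup \<gamma>(n) is central, so every element of \<gamma>(n) \<inter> G(j) can be
  slid into the j-th factor of P, whence P S \<subseteq> P M for the subgroup S generated by the sets
  \<gamma>(n) \<inter> G(j). The subgroup S M contains the open subgroup K, so it is closed and contains the
  closed subgroup generated by these sets, which is \<gamma>(n) by hypothesis. Therefore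
  P \<gamma>(n) K \<subseteq> P M K = P \<gamma>(n+1) K.
\<close>

section \<open>Inverse limits of finite groups\<close>

lemma finite_nilpotent_inverse_systemD:
  assumes "finite_nilpotent_inverse_system I rel H \<phi>"
  shows "I \<noteq> {}"
    and "\<And>i. i \<in> I \<Longrightarrow> rel i i"
    and "\<And>i j k. \<lbrakk>i \<in> I; j \<in> I; k \<in> I; rel i j; rel j k\<rbrakk> \<Longrightarrow> rel i k"
    and "\<And>i j. \<lbrakk>i \<in> I; j \<in> I\<rbrakk> \<Longrightarrow> \<exists>k\<in>I. rel i k \<and> rel j k"
    and "\<And>i. i \<in> I \<Longrightarrow> group (H i)"
    and "\<And>i. i \<in> I \<Longrightarrow> finite (carrier (H i))"
    and "\<And>i. i \<in> I \<Longrightarrow> nilpotent_group (H i)"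
    and "\<And>i j. \<lbrakk>i \<in> I; j \<in> I; rel i j\<rbrakk> \<Longrightarrow> \<phi> i j \<in> hom (H j) (H i)"
  using assms unfolding finite_nilpotent_inverse_system_def by (elim conjE; blast)+

lemma finite_nilpotent_inverse_system_upper_bound:
  assumes S: "finite_nilpotent_inverse_system I rel H \<phi>" and "finite J" "J \<subseteq> I"
  shows "\<exists>k\<in>I. \<forall>i\<in>J. rel i k"
  using \<open>finite J\<close> \<open>J \<subseteq> I\<close>
proof (induction J rule: finite_induct)
  case empty
  then show ?case using finite_nilpotent_inverse_systemD(1)[OF S] by blast
next
  case (insert a J)
  then obtain k where k: "k \<in> I" "\<forall>i\<in>J. rel i k" by blast
  obtain k' where k': "k' \<in> I" "rel a k'" "rel k k'"
    using finite_nilpotent_inverse_systemD(4)[OF S, of a k] insert k by blast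
  have "\<forall>i\<in>J. rel i k'"
    using k k' insert finite_nilpotent_inverse_systemD(3)[OF S] by blast
  then show ?case using k' by blast
qed

lemma closedin_inv_lim_carrier:
  assumes S: "finite_nilpotent_inverse_system I rel H \<phi>"
  shows "closedin (product_topology (\<lambda>i. discrete_topology (carrier (H i))) I)
           (inv_lim_carrier I rel H \<phi>)"
proof -
  let ?D = "\<lambda>i. discrete_topology (carrier (H i))"
  let ?X = "product_topology ?D I"
  let ?F = "{{x \<in> topspace ?X. \<phi> i j (x j) = x i} | i j. i \<in> I \<and> j \<in> I \<and> rel i j}"
  have closed_eq: "closedin ?X {x \<in> topspace ?X. \<phi> i j (x j) = x i}"
    if ij: "i \<in> I" "j \<in> I" "rel i j" for i j
  proof (rule closedin_continuous_maps_eq)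
    have "continuous_map (?D j) (?D i) (\<phi> i j)"
      using finite_nilpotent_inverse_systemD(8)[OF S ij] by (simp add: hom_def Pi_iff)
    from continuous_map_compose[OF continuous_map_product_projection[OF \<open>j \<in> I\<close>, of ?D] this]
    show "continuous_map ?X (?D i) (\<lambda>x. \<phi> i j (x j))"
      by (simp add: o_def)
    show "continuous_map ?X (?D i) (\<lambda>x. x i)"
      using continuous_map_product_projection[OF \<open>i \<in> I\<close>, of ?D] by simp
  qed simp
  have "?F \<noteq> {}"
    using finite_nilpotent_inverse_systemD(1,2)[OF S] by blast
  then have "closedin ?X (\<Inter>?F)"
    by (rule closedin_Inter) (use closed_eq in blast)
  moreover have "inv_lim_carrier I rel H \<phi> = topspace ?X \<inter> \<Inter>?F"
    unfolding inv_lim_carrier_def topspace_product_topology topspace_discrete_topology by blast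
  ultimately show ?thesis
    by (simp only:) (rule closedin_Int[OF closedin_topspace])
qed

lemma compact_space_inv_lim_topology:
  assumes S: "finite_nilpotent_inverse_system I rel H \<phi>"
  shows "compact_space (inv_lim_topology I rel H \<phi>)"
proof -
  have "compact_space (product_topology (\<lambda>i. discrete_topology (carrier (H i))) I)"
    using finite_nilpotent_inverse_systemD(6)[OF S]
    by (simp add: compact_space_product_topology compact_space_discrete_topology)
  then show ?thesis
    unfolding inv_lim_topology_def
    by (intro compact_space_subtopology closedin_compact_space closedin_inv_lim_carrier[OF S])
qed

lemma Hausdorff_space_inv_lim_topology: "Hausdorff_space (inv_lim_topology I rel H \<phi>)"
  unfolding inv_lim_topology_def
  by (simp add: Hausdorff_space_subtopology Hausdorff_space_product_topology)

section \<open>Ordered products modulo a normal subgroup\<close>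

lemma set_multI:
  fixes G (structure)
  shows "a \<in> A \<Longrightarrow> b \<in> B \<Longrightarrow> a \<otimes> b \<in> A <#> B"
  unfolding set_mult_def by blast

lemma set_multE:
  fixes G (structure)
  assumes "z \<in> A <#> B"
  obtains a b where "a \<in> A" "b \<in> B" "z = a \<otimes> b"
  using assms unfolding set_mult_def by blast

context group
begin

lemma inv_mult_cancel_left [simp]:
  "x \<in> carrier G \<Longrightarrow> y \<in> carrier G \<Longrightarrow> inv x \<otimes> (x \<otimes> y) = y"
  by (simp add: m_assoc [symmetric])

lemma mult_inv_cancel_left [simp]:
  "x \<in> carrier G \<Longrightarrow> y \<in> carrier G \<Longrightarrow> x \<otimes> (inv x \<otimes> y) = y"
  by (simp add: m_assoc [symmetric])

lemma commutator_closed [simp]: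
  "x \<in> carrier G \<Longrightarrow> h \<in> carrier G \<Longrightarrow> commutator G x h \<in> carrier G"
  by (simp add: commutator_def)

lemma conj_commutator:
  assumes "g \<in> carrier G" "x \<in> carrier G" "h \<in> carrier G"
  shows "g \<otimes> commutator G x h \<otimes> inv g = commutator G (g \<otimes> x \<otimes> inv g) (g \<otimes> h \<otimes> inv g)"
  using assms by (simp add: commutator_def m_assoc inv_mult_group)

lemma mult_swap_commutator:
  assumes "x \<in> carrier G" "h \<in> carrier G"
  shows "h \<otimes> x = x \<otimes> h \<otimes> inv (commutator G x h)"
  using assms by (simp add: commutator_def m_assoc inv_mult_group)

lemma subgroup_lcs: "subgroup (lcs G n) G"
proof -
  have "subgroup (lcs G (Suc n)) G" for n
  proof (induction n)
    case 0
    show ?case by (simp add: subgroup_self)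
  next
    case (Suc n)
    then have "comm_set G (lcs G (Suc n)) \<subseteq> carrier G"
      by (auto simp: comm_set_def dest: subgroup.mem_carrier)
    then show ?case by (simp add: generate_is_subgroup)
  qed
  then show ?thesis by (cases n) (auto simp: subgroup_self)
qed

lemma ordered_set_prod_subset_carrier:
  "\<forall>j\<in>{1..k}. Gs j \<subseteq> carrier G \<Longrightarrow> ordered_set_prod G Gs k \<subseteq> carrier G"
proof (induction k)
  case (Suc k)
  then have "ordered_set_prod G Gs k \<subseteq> carrier G" "Gs (Suc k) \<subseteq> carrier G"
    by auto
  then show ?case by (simp add: setmult_subset_G)
qed simp

lemma one_in_ordered_set_prod:
  "\<forall>j\<in>{1..k}. \<one> \<in> Gs j \<Longrightarrow> \<one> \<in> ordered_set_prod G Gs k"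
proof (induction k)
  case (Suc k)
  then have "\<one> \<otimes> \<one> \<in> ordered_set_prod G Gs (Suc k)"
    unfolding ordered_set_prod.simps by (intro set_multI) auto
  then show ?case by simp
qed simp

text \<open>Being central modulo M, g can be slid to the right into the slot of the factor Gs j
  containing it.\<close>
lemma ordered_set_prod_mult_mod_normal:
  assumes M: "M \<lhd> G"
    and central: "\<forall>h\<in>carrier G. commutator G g h \<in> M"
    and Gs: "\<forall>j\<in>{1..k}. subgroup (Gs j) G"
    and g: "g \<in> Gs j" "j \<in> {1..k}"
    and p: "p \<in> ordered_set_prod G Gs k"
  shows "p \<otimes> g \<in> ordered_set_prod G Gs k <#> M"
  using Gs g p
proof (induction k arbitrary: p)
  case 0
  then show ?case by simp
next
  case (Suc k)
  have sub: "subgroup (Gs (Suc k)) G"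
    using Suc.prems(1) by simp
  have Ps: "ordered_set_prod G Gs k \<subseteq> carrier G"
    using Suc.prems(1) subgroup.subset by (intro ordered_set_prod_subset_carrier) force
  from Suc.prems(4) obtain q a where q: "q \<in> ordered_set_prod G Gs k" and a: "a \<in> Gs (Suc k)"
    and p: "p = q \<otimes> a"
    by (auto elim: set_multE)
  have qc: "q \<in> carrier G" and ac: "a \<in> carrier G" and gc: "g \<in> carrier G"
    using q a Ps Suc.prems(1-3) by (auto dest: subgroup.mem_carrier)
  have M1: "\<one> \<in> M" and Mc: "M \<subseteq> carrier G"
    using M normal_imp_subgroup subgroup.one_closed subgroup.subset by blast+
  show ?case
  proof (cases "j = Suc k")
    case True
    then have "a \<otimes> g \<in> Gs (Suc k)"
      using sub a Suc.prems(2) by (simp add: subgroup.m_closed)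
    then have "q \<otimes> (a \<otimes> g) \<otimes> \<one> \<in> ordered_set_prod G Gs (Suc k) <#> M"
      using q M1 by (simp add: set_multI)
    then show ?thesis
      using p qc ac gc by (simp add: m_assoc)
  next
    case False
    then have "q \<otimes> g \<in> ordered_set_prod G Gs k <#> M"
      using Suc.IH[OF _ _ _ q] Suc.prems(1-3) by auto
    then obtain q' m where q': "q' \<in> ordered_set_prod G Gs k" and m: "m \<in> M"
      and qg: "q \<otimes> g = q' \<otimes> m"
      by (auto elim: set_multE)
    have q'c: "q' \<in> carrier G" and mc: "m \<in> carrier G"
      using q' m Ps Mc by auto
    let ?c = "commutator G g a"
    have cM: "?c \<in> M"
      using central ac by blast
    have "p \<otimes> g = q \<otimes> g \<otimes> a \<otimes> inv ?c"
      using p qc ac gc mult_swap_commutator[OF gc ac] by (simp add: m_assoc)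
    also have "\<dots> = (q' \<otimes> a) \<otimes> ((inv a \<otimes> m \<otimes> a) \<otimes> inv ?c)"
      using qg q'c mc ac gc by (simp add: m_assoc)
    finally show ?thesis
      using q' a M cM ac m
      by (auto intro!: set_multI normal.inv_op_closed1
               intro: subgroup.m_closed subgroup.m_inv_closed normal_imp_subgroup)
  qed
qed

lemma right_mult_closed_mod_normal:
  assumes M: "M \<lhd> G" and P: "P \<subseteq> carrier G"
    and s: "s1 \<in> carrier G" "s2 \<in> carrier G"
    and s1: "\<forall>p\<in>P. p \<otimes> s1 \<in> P <#> M" and s2: "\<forall>p\<in>P. p \<otimes> s2 \<in> P <#> M"
  shows "\<forall>p\<in>P. p \<otimes> (s1 \<otimes> s2) \<in> P <#> M"
proof
  fix p assume p: "p \<in> P"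
  have Msub: "subgroup M G"
    using M by (rule normal_imp_subgroup)
  obtain q m where q: "q \<in> P" and m: "m \<in> M" and qm: "p \<otimes> s1 = q \<otimes> m"
    using s1 p by (blast elim: set_multE)
  obtain q' m' where q': "q' \<in> P" and m': "m' \<in> M" and qm': "q \<otimes> s2 = q' \<otimes> m'"
    using s2 q by (blast elim: set_multE)
  have carr: "p \<in> carrier G" "q \<in> carrier G" "q' \<in> carrier G" "m \<in> carrier G" "m' \<in> carrier G"
    using p q q' m m' P subgroup.mem_carrier[OF Msub] by auto
  have "p \<otimes> (s1 \<otimes> s2) = (p \<otimes> s1) \<otimes> s2"
    using carr s by (simp add: m_assoc)
  also have "\<dots> = (q \<otimes> s2) \<otimes> (inv s2 \<otimes> m \<otimes> s2)"
    using qm carr s by (simp add: m_assoc)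
  also have "\<dots> = q' \<otimes> (m' \<otimes> (inv s2 \<otimes> m \<otimes> s2))"
    using qm' carr s by (simp add: m_assoc)
  finally have "p \<otimes> (s1 \<otimes> s2) = q' \<otimes> (m' \<otimes> (inv s2 \<otimes> m \<otimes> s2))" .
  moreover have "inv s2 \<otimes> m \<otimes> s2 \<in> M"
    using M m s by (simp add: normal.inv_op_closed1)
  ultimately show "p \<otimes> (s1 \<otimes> s2) \<in> P <#> M"
    using q' m' by (simp add: set_multI subgroup.m_closed[OF Msub])
qed

lemma ordered_set_prod_mult_generate_mod_normal:
  assumes M: "M \<lhd> G" and N: "subgroup N G"
    and comm: "\<forall>x\<in>N. \<forall>h\<in>carrier G. commutator G x h \<in> M"
    and Gs: "\<forall>j\<in>{1..k}. subgroup (Gs j) G"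
  shows "ordered_set_prod G Gs k <#> generate G (\<Union>j\<in>{1..k}. N \<inter> Gs j)
           \<subseteq> ordered_set_prod G Gs k <#> M"
proof -
  let ?P = "ordered_set_prod G Gs k"
  have Ps: "?P \<subseteq> carrier G"
    using Gs subgroup.subset by (intro ordered_set_prod_subset_carrier) blast
  have Msub: "subgroup M G"
    using M normal_imp_subgroup by blast
  have gen_carrier: "generate G (\<Union>j\<in>{1..k}. N \<inter> Gs j) \<subseteq> carrier G"
    using Gs subgroup.subset by (intro generate_incl) blast
  have "\<forall>p\<in>?P. p \<otimes> s \<in> ?P <#> M" if "s \<in> generate G (\<Union>j\<in>{1..k}. N \<inter> Gs j)" for s
    using that
  proof (induction s rule: generate.induct)
    case one
    then show ?case by (simp add: set_multI subgroup.one_closed[OF Msub])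
  next
    case (incl g)
    then obtain j where "j \<in> {1..k}" "g \<in> N" "g \<in> Gs j"
      by blast
    then show ?case
      using comm ordered_set_prod_mult_mod_normal[OF M _ Gs] by blast
  next
    case (inv g)
    then obtain j where "j \<in> {1..k}" "g \<in> N" "g \<in> Gs j"
      by blast
    moreover from this have "inv g \<in> N" "inv g \<in> Gs j"
      using N Gs by (simp_all add: subgroup.m_inv_closed)
    ultimately show ?case
      using comm ordered_set_prod_mult_mod_normal[OF M _ Gs] by blast
  next
    case (eng s1 s2)
    have "s1 \<in> carrier G" "s2 \<in> carrier G"
      using eng.hyps gen_carrier by auto
    then show ?case
      using right_mult_closed_mod_normal[OF M Ps _ _ eng.IH] by blast
  qed
  then show ?thesis
    by (auto elim!: set_multE)
qed

end

section \<open>Closed subgroups of topological groups\<close>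

lemma (in group_hom) subgroup_preimage:
  assumes "subgroup K H"
  shows "subgroup {x \<in> carrier G. h x \<in> K} G"
proof (rule G.subgroupI)
  show "{x \<in> carrier G. h x \<in> K} \<noteq> {}"
    using subgroup.one_closed[OF assms] by force
qed (auto simp: subgroup.m_inv_closed[OF assms] subgroup.m_closed[OF assms])

lemma subset_closed_generate: "A \<subseteq> closed_generate G T A"
  unfolding closed_generate_def by blast

lemma closed_generate_minimal:
  "closed_subgroup G T V \<Longrightarrow> A \<subseteq> V \<Longrightarrow> closed_generate G T A \<subseteq> V"
  unfolding closed_generate_def by blast

locale top_group =
  fixes G :: "('a, 'm) monoid_scheme" (structure) and T :: "'a topology"
  assumes topological_group: "topological_group G T"
begin

sublocale group G
  using topological_group by (simp add: topological_group_def)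

lemma topspace_eq: "topspace T = carrier G"
  using topological_group by (simp add: topological_group_def)

lemma continuous_map_mult:
  assumes "continuous_map T T g" "continuous_map T T h"
  shows "continuous_map T T (\<lambda>y. g y \<otimes> h y)"
proof -
  have "continuous_map (prod_topology T T) T (\<lambda>(x, y). x \<otimes> y)"
    using topological_group by (simp add: topological_group_def)
  from continuous_map_compose[OF continuous_map_pairedI[OF assms] this]
  show ?thesis by (simp add: o_def)
qed

lemma continuous_map_inv:
  assumes "continuous_map T T g"
  shows "continuous_map T T (\<lambda>y. inv (g y))"
proof -
  have "continuous_map T T (\<lambda>x. inv x)"
    using topological_group by (simp add: topological_group_def)
  from continuous_map_compose[OF assms this] show ?thesis
    by (simp add: o_def)
qed

lemma continuous_map_const_carrier: "x \<in> carrier G \<Longrightarrow> continuous_map T T (\<lambda>y. x)"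
  by (simp add: topspace_eq)

lemma continuous_map_left_mult: "x \<in> carrier G \<Longrightarrow> continuous_map T T (\<lambda>y. x \<otimes> y)"
  by (intro continuous_map_mult continuous_map_const_carrier continuous_map_id[unfolded id_def])

lemma continuous_map_conj: "g \<in> carrier G \<Longrightarrow> continuous_map T T (\<lambda>y. g \<otimes> y \<otimes> inv g)"
  by (intro continuous_map_mult continuous_map_const_carrier continuous_map_id[unfolded id_def])
     auto

lemma closed_subgroup_closed_generate:
  assumes "A \<subseteq> carrier G"
  shows "closed_subgroup G T (closed_generate G T A)"
proof -
  let ?F = "{V. closed_subgroup G T V \<and> A \<subseteq> V}"
  have "carrier G \<in> ?F"
    using assms closedin_topspace[of T] by (simp add: closed_subgroup_def subgroup_self topspace_eq)
  then have "subgroup (\<Inter>?F) G" and "closedin T (\<Inter>?F)"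
    by (auto simp: closed_subgroup_def intro!: subgroups_Inter closedin_Inter)
  then show ?thesis
    unfolding closed_generate_def closed_subgroup_def by blast
qed

lemma closed_subgroup_conj_preimage:
  assumes N: "closed_subgroup G T N" and g: "g \<in> carrier G"
  shows "closed_subgroup G T {y \<in> carrier G. g \<otimes> y \<otimes> inv g \<in> N}"
proof -
  have "closedin T {y \<in> topspace T. g \<otimes> y \<otimes> inv g \<in> N}"
    using N closedin_continuous_map_preimage[OF continuous_map_conj[OF g]]
    by (simp add: closed_subgroup_def)
  moreover have "group_hom G G (\<lambda>y. g \<otimes> y \<otimes> inv g)"
    using g by unfold_locales (auto simp: hom_def m_assoc)
  then have "subgroup {y \<in> carrier G. g \<otimes> y \<otimes> inv g \<in> N} G"
    using N by (simp add: closed_subgroup_def group_hom.subgroup_preimage)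
  ultimately show ?thesis
    by (simp add: closed_subgroup_def topspace_eq)
qed

lemma closed_normal_tlcs:
  "closed_subgroup G T (tlcs G T (Suc n)) \<and> tlcs G T (Suc n) \<lhd> G"
proof (induction n)
  case 0
  have "carrier G \<lhd> G"
    by (simp add: normal_inv_iff subgroup_self)
  then show ?case
    using closedin_topspace[of T] by (simp add: closed_subgroup_def subgroup_self topspace_eq)
next
  case (Suc n)
  let ?N = "tlcs G T (Suc n)"
  let ?A = "comm_set G ?N"
  have "?N \<subseteq> carrier G"
    using Suc normal_imp_subgroup subgroup.subset by blast
  then have "?A \<subseteq> carrier G"
    by (auto simp: comm_set_def)
  then have closed: "closed_subgroup G T (closed_generate G T ?A)"
    by (rule closed_subgroup_closed_generate)
  have "g \<otimes> x \<otimes> inv g \<in> closed_generate G T ?A"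
    if g: "g \<in> carrier G" and x: "x \<in> closed_generate G T ?A" for g x
  proof -
    have "?A \<subseteq> {y \<in> carrier G. g \<otimes> y \<otimes> inv g \<in> closed_generate G T ?A}"
    proof
      fix z assume "z \<in> ?A"
      then obtain a h where a: "a \<in> ?N" and h: "h \<in> carrier G" and z: "z = commutator G a h"
        unfolding comm_set_def by blast
      have ac: "a \<in> carrier G"
        using a \<open>?N \<subseteq> carrier G\<close> by blast
      have "g \<otimes> a \<otimes> inv g \<in> ?N"
        using Suc a g by (simp add: normal.inv_op_closed2)
      then have "commutator G (g \<otimes> a \<otimes> inv g) (g \<otimes> h \<otimes> inv g) \<in> ?A"
        using g h unfolding comm_set_def by blast
      then show "z \<in> {y \<in> carrier G. g \<otimes> y \<otimes> inv g \<in> closed_generate G T ?A}"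
        using conj_commutator[OF g ac h] subset_closed_generate[of ?A] z ac h by auto
    qed
    then show ?thesis
      using closed_generate_minimal[OF closed_subgroup_conj_preimage[OF closed g]] x by blast
  qed
  then show ?case
    using closed by (simp add: normal_inv_iff closed_subgroup_def)
qed

lemma closed_subgroup_tlcs: "closed_subgroup G T (tlcs G T (Suc n))"
  using closed_normal_tlcs by blast

lemma normal_tlcs: "tlcs G T (Suc n) \<lhd> G"
  using closed_normal_tlcs by blast

lemma tlcs_subset_carrier: "tlcs G T (Suc n) \<subseteq> carrier G"
  using closed_subgroup_tlcs by (simp add: closed_subgroup_def subgroup.subset)

lemma commutator_in_tlcs:
  "x \<in> tlcs G T (Suc n) \<Longrightarrow> h \<in> carrier G \<Longrightarrow> commutator G x h \<in> tlcs G T (Suc (Suc n))"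
  by (auto simp: comm_set_def intro!: subsetD[OF subset_closed_generate])

text \<open>The complement of A is a union of cosets of the open subgroup K.\<close>
lemma closedin_subgroup_if_open_subgroup:
  assumes A: "subgroup A G" and K: "subgroup K G" "openin T K" "K \<subseteq> A"
  shows "closedin T A"
proof -
  have "\<exists>W. openin T W \<and> y \<in> W \<and> W \<subseteq> carrier G - A" if y: "y \<in> carrier G - A" for y
  proof (intro exI conjI)
    let ?W = "{z \<in> topspace T. inv y \<otimes> z \<in> K}"
    show "openin T ?W"
      using y K(2) continuous_map_left_mult[of "inv y"]
      by (intro openin_continuous_map_preimage) auto
    show "y \<in> ?W"
      using y subgroup.one_closed[OF K(1)] by (simp add: topspace_eq)
    show "?W \<subseteq> carrier G - A"
    proof
      fix z assume z: "z \<in> ?W"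
      then have zc: "z \<in> carrier G"
        by (simp add: topspace_eq)
      have "z \<notin> A"
      proof
        assume "z \<in> A"
        then have "inv y \<otimes> z \<otimes> inv z \<in> A"
          using z A K(3) by (auto intro: subgroup.m_closed subgroup.m_inv_closed)
        then have "inv y \<in> A"
          using y zc by (simp add: m_assoc)
        then show False
          using y subgroup.m_inv_closed[OF A, of "inv y"] by simp
      qed
      with zc show "z \<in> carrier G - A" by blast
    qed
  qed
  then have "openin T (carrier G - A)"
    by (subst openin_subopen) blast
  then show ?thesis
    using subgroup.subset[OF A] by (simp add: closedin_def topspace_eq)
qed

lemma compactin_ordered_set_prod:
  "\<forall>j\<in>{1..k}. compactin T (Gs j) \<Longrightarrow> compactin T (ordered_set_prod G Gs k)"
proof (induction k)
  case 0
  then show ?case by (simp add: topspace_eq)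
next
  case (Suc k)
  let ?P = "ordered_set_prod G Gs k"
  have "compactin (prod_topology T T) (?P \<times> Gs (Suc k))"
    using Suc by (simp add: compactin_Times)
  moreover have "continuous_map (prod_topology T T) T (\<lambda>(x, y). x \<otimes> y)"
    using topological_group by (simp add: topological_group_def)
  ultimately have "compactin T ((\<lambda>(x, y). x \<otimes> y) ` (?P \<times> Gs (Suc k)))"
    by (rule image_compactin)
  moreover have "(\<lambda>(x, y). x \<otimes> y) ` (?P \<times> Gs (Suc k)) = ?P <#> Gs (Suc k)"
    unfolding set_mult_def by auto
  ultimately show ?case by simp
qed

lemma carrier_subset_if_closedin_dense:
  assumes P: "closedin T P"
    and dense: "\<And>U. openin T U \<Longrightarrow> \<one> \<in> U \<Longrightarrow> carrier G \<subseteq> P <#> U"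
  shows "carrier G \<subseteq> P"
proof
  fix x assume x: "x \<in> carrier G"
  show "x \<in> P"
  proof (rule ccontr)
    assume "x \<notin> P"
    let ?U = "{u \<in> topspace T. x \<otimes> inv u \<in> topspace T - P}"
    have "continuous_map T T (\<lambda>u. x \<otimes> inv u)"
      using continuous_map_inv[OF continuous_map_id[unfolded id_def]]
      by (intro continuous_map_mult continuous_map_const_carrier x)
    then have "openin T ?U"
      using P by (intro openin_continuous_map_preimage) auto
    moreover have "\<one> \<in> ?U"
      using x \<open>x \<notin> P\<close> by (simp add: topspace_eq)
    ultimately have "x \<in> P <#> ?U"
      using dense x by blast
    then obtain q u where "q \<in> P" "u \<in> ?U" "x = q \<otimes> u"
      by (rule set_multE)
    moreover have "q \<in> carrier G"
      using \<open>q \<in> P\<close> closedin_subset[OF P] by (auto simp: topspace_eq)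
    ultimately show False
      by (auto simp: topspace_eq m_assoc)
  qed
qed

lemma tlcs_subset_generate_mult:
  assumes K: "K \<lhd> G" "openin T K"
    and gen: "tlcs G T (Suc n) = closed_generate G T (\<Union>j\<in>{1..t}. tlcs G T (Suc n) \<inter> Gs j)"
  shows "tlcs G T (Suc n)
           \<subseteq> generate G (\<Union>j\<in>{1..t}. tlcs G T (Suc n) \<inter> Gs j) <#> (tlcs G T (Suc (Suc n)) <#> K)"
proof -
  let ?N = "tlcs G T (Suc n)"
  let ?M = "tlcs G T (Suc (Suc n)) <#> K"
  let ?S = "generate G (\<Union>j\<in>{1..t}. ?N \<inter> Gs j)"
  have M: "?M \<lhd> G"
    using normal_tlcs K(1) by (rule normal_subgroup_set_mult_closed)
  have S: "subgroup ?S G"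
    using tlcs_subset_carrier by (intro generate_is_subgroup) blast
  have SM: "subgroup (?S <#> ?M) G"
    using mult_norm_subgroup[OF M S] commut_normal[OF S M] by simp
  have one: "\<one> \<in> ?S" "\<one> \<in> ?M" "\<one> \<in> tlcs G T (Suc (Suc n))"
    using S M normal_tlcs normal_imp_subgroup subgroup.one_closed by blast+
  have "K \<subseteq> ?S <#> ?M"
  proof
    fix k assume k: "k \<in> K"
    then have "\<one> \<otimes> (\<one> \<otimes> k) \<in> ?S <#> ?M"
      using one by (intro set_multI) auto
    then show "k \<in> ?S <#> ?M"
      using k K(1) normal_imp_subgroup subgroup.mem_carrier by fastforce
  qed
  then have "closedin T (?S <#> ?M)"
    using K SM normal_imp_subgroup by (intro closedin_subgroup_if_open_subgroup) auto
  moreover have "(\<Union>j\<in>{1..t}. ?N \<inter> Gs j) \<subseteq> ?S <#> ?M"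
  proof
    fix x assume x: "x \<in> (\<Union>j\<in>{1..t}. ?N \<inter> Gs j)"
    then have "x \<otimes> \<one> \<in> ?S <#> ?M"
      using one by (intro set_multI generate.incl)
    then show "x \<in> ?S <#> ?M"
      using x tlcs_subset_carrier[of n] by auto
  qed
  ultimately have "closed_generate G T (\<Union>j\<in>{1..t}. ?N \<inter> Gs j) \<subseteq> ?S <#> ?M"
    using SM by (intro closed_generate_minimal) (auto simp: closed_subgroup_def)
  then show ?thesis
    by (simp only: gen [symmetric])
qed

lemma ordered_set_prod_tlcs_step:
  assumes K: "K \<lhd> G" "openin T K"
    and Gs: "\<forall>j\<in>{1..t}. closed_subgroup G T (Gs j)"
    and gen: "tlcs G T (Suc n) = closed_generate G T (\<Union>j\<in>{1..t}. tlcs G T (Suc n) \<inter> Gs j)"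
  shows "ordered_set_prod G Gs t <#> tlcs G T (Suc n)
           \<subseteq> ordered_set_prod G Gs t <#> (tlcs G T (Suc (Suc n)) <#> K)"
proof -
  let ?P = "ordered_set_prod G Gs t"
  let ?N = "tlcs G T (Suc n)"
  let ?M = "tlcs G T (Suc (Suc n)) <#> K"
  let ?S = "generate G (\<Union>j\<in>{1..t}. ?N \<inter> Gs j)"
  have Gs_sub: "\<forall>j\<in>{1..t}. subgroup (Gs j) G"
    using Gs by (simp add: closed_subgroup_def)
  have M: "?M \<lhd> G"
    using normal_tlcs K(1) by (rule normal_subgroup_set_mult_closed)
  then have M_sub: "subgroup ?M G"
    by (rule normal_imp_subgroup)
  have "?P \<subseteq> carrier G"
    using Gs_sub subgroup.subset by (intro ordered_set_prod_subset_carrier) blast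
  moreover have "?S \<subseteq> carrier G"
    using tlcs_subset_carrier by (intro generate_incl) blast
  ultimately have carr: "?P \<subseteq> carrier G" "?S \<subseteq> carrier G" "?M \<subseteq> carrier G"
    using M_sub subgroup.subset by blast+
  have comm: "\<forall>x\<in>?N. \<forall>h\<in>carrier G. commutator G x h \<in> ?M"
  proof (intro ballI)
    fix x h assume "x \<in> ?N" "h \<in> carrier G"
    then have "commutator G x h \<otimes> \<one> \<in> ?M"
      using commutator_in_tlcs K(1) normal_imp_subgroup subgroup.one_closed
      by (blast intro: set_multI)
    then show "commutator G x h \<in> ?M"
      using \<open>x \<in> ?N\<close> \<open>h \<in> carrier G\<close> tlcs_subset_carrier[of n] by auto
  qed
  have "?P <#> ?N \<subseteq> ?P <#> (?S <#> ?M)"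
    using tlcs_subset_generate_mult[OF K gen] by (intro mono_set_mult) auto
  also have "\<dots> = (?P <#> ?S) <#> ?M"
    using carr by (simp add: set_mult_assoc)
  also have "\<dots> \<subseteq> (?P <#> ?M) <#> ?M"
    using ordered_set_prod_mult_generate_mod_normal[OF M normal_imp_subgroup[OF normal_tlcs]
                                                    comm Gs_sub]
    by (rule mono_set_mult) simp
  also have "\<dots> = ?P <#> ?M"
    using carr by (simp add: set_mult_assoc subgroup_mult_id[OF M_sub] del: tlcs.simps)
  finally show ?thesis .
qed

lemma carrier_subset_ordered_set_prod_tlcs:
  assumes K: "K \<lhd> G" "openin T K"
    and Gs: "\<forall>j\<in>{1..t}. closed_subgroup G T (Gs j)"
    and gen: "\<forall>i\<ge>1. tlcs G T i = closed_generate G T (\<Union>j\<in>{1..t}. tlcs G T i \<inter> Gs j)"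
  shows "carrier G \<subseteq> ordered_set_prod G Gs t <#> tlcs G T (Suc n) <#> K"
proof (induction n)
  case 0
  have "\<one> \<in> ordered_set_prod G Gs t"
    using Gs by (intro one_in_ordered_set_prod) (simp add: closed_subgroup_def subgroup.one_closed)
  moreover have "\<one> \<in> K"
    using K(1) normal_imp_subgroup subgroup.one_closed by blast
  ultimately have "(\<one> \<otimes> x) \<otimes> \<one> \<in> ordered_set_prod G Gs t <#> tlcs G T (Suc 0) <#> K"
    if "x \<in> carrier G" for x
    using that by (intro set_multI) auto
  then show ?case
    by (metis l_one r_one one_closed subsetI)
next
  case (Suc n)
  let ?P = "ordered_set_prod G Gs t"
  have "?P \<subseteq> carrier G"
    using Gs subgroup.subset
    by (intro ordered_set_prod_subset_carrier) (auto simp: closed_subgroup_def)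
  moreover have "K \<subseteq> carrier G"
    using K(1) normal_imp_subgroup subgroup.subset by blast
  ultimately have carr: "?P \<subseteq> carrier G" "K \<subseteq> carrier G" "tlcs G T (Suc (Suc n)) \<subseteq> carrier G"
    using tlcs_subset_carrier by blast+
  note Suc.IH
  also have "?P <#> tlcs G T (Suc n) <#> K \<subseteq> ?P <#> (tlcs G T (Suc (Suc n)) <#> K) <#> K"
    using gen by (intro mono_set_mult ordered_set_prod_tlcs_step[OF K Gs]) auto
  also have "\<dots> = ?P <#> tlcs G T (Suc (Suc n)) <#> K"
    using carr
    by (simp add: set_mult_assoc setmult_subset_G subgroup_mult_id[OF normal_imp_subgroup[OF K(1)]])
  finally show ?case .
qed

end

section \<open>Pronilpotent groups\<close>

locale inverse_limit_presentation = top_group +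
  fixes I :: "'i set" and rel :: "'i \<Rightarrow> 'i \<Rightarrow> bool" and H :: "'i \<Rightarrow> 'c monoid"
    and \<phi> :: "'i \<Rightarrow> 'i \<Rightarrow> 'c \<Rightarrow> 'c" and f :: "'a \<Rightarrow> 'i \<Rightarrow> 'c"
  assumes system: "finite_nilpotent_inverse_system I rel H \<phi>"
    and f_bij: "bij_betw f (carrier G) (inv_lim_carrier I rel H \<phi>)"
    and f_mult: "\<forall>x\<in>carrier G. \<forall>y\<in>carrier G. f (x \<otimes> y) = (\<lambda>i\<in>I. f x i \<otimes>\<^bsub>H i\<^esub> f y i)"
    and f_homeomorphic: "homeomorphic_map T (inv_lim_topology I rel H \<phi>) f"
begin

lemma compact_space_T: "compact_space T"
  using compact_space_inv_lim_topology[OF system] homeomorphic_compact_space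
    homeomorphic_map_imp_homeomorphic_space[OF f_homeomorphic] by blast

lemma Hausdorff_space_T: "Hausdorff_space T"
  using Hausdorff_space_inv_lim_topology homeomorphic_Hausdorff_space
    homeomorphic_map_imp_homeomorphic_space[OF f_homeomorphic] by blast

definition proj :: "'i \<Rightarrow> 'a \<Rightarrow> 'c" where
  "proj k x = f x k"

lemma f_in_inv_lim_carrier: "x \<in> carrier G \<Longrightarrow> f x \<in> inv_lim_carrier I rel H \<phi>"
  using f_bij bij_betwE by blast

lemma proj_carrier: "k \<in> I \<Longrightarrow> x \<in> carrier G \<Longrightarrow> proj k x \<in> carrier (H k)"
  using f_in_inv_lim_carrier[of x] unfolding proj_def inv_lim_carrier_def by (auto simp: PiE_iff)

lemma proj_compat:
  "\<lbrakk>i \<in> I; k \<in> I; rel i k; x \<in> carrier G\<rbrakk> \<Longrightarrow> proj i x = \<phi> i k (proj k x)"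
  using f_in_inv_lim_carrier[of x] unfolding proj_def inv_lim_carrier_def by auto

lemma group_hom_proj: "k \<in> I \<Longrightarrow> group_hom G (H k) (proj k)"
  using proj_carrier f_mult finite_nilpotent_inverse_systemD(5)[OF system]
  by (auto simp: group_hom_def group_hom_axioms_def hom_def proj_def is_group)

lemma continuous_map_proj:
  assumes k: "k \<in> I"
  shows "continuous_map T (discrete_topology (carrier (H k))) (proj k)"
proof -
  have "continuous_map T (product_topology (\<lambda>i. discrete_topology (carrier (H i))) I) f"
    using homeomorphic_imp_continuous_map[OF f_homeomorphic]
    unfolding inv_lim_topology_def continuous_map_in_subtopology by blast
  from continuous_map_compose[OF this continuous_map_product_projection[OF k]]
  show ?thesis by (simp add: o_def proj_def[abs_def])
qed

lemma
  assumes "k \<in> I"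
  shows openin_proj_preimage: "openin T {x \<in> carrier G. proj k x \<in> C}"
    and closedin_proj_preimage: "closedin T {x \<in> carrier G. proj k x \<in> C}"
proof -
  have eq: "{x \<in> topspace T. proj k x \<in> C \<inter> carrier (H k)} = {x \<in> carrier G. proj k x \<in> C}"
    using proj_carrier[OF assms] by (auto simp: topspace_eq)
  have "openin T {x \<in> topspace T. proj k x \<in> C \<inter> carrier (H k)}"
    by (rule openin_continuous_map_preimage[OF continuous_map_proj[OF assms]]) simp
  then show "openin T {x \<in> carrier G. proj k x \<in> C}"
    by (simp only: eq)
  have "closedin T {x \<in> topspace T. proj k x \<in> C \<inter> carrier (H k)}"
    by (rule closedin_continuous_map_preimage[OF continuous_map_proj[OF assms]]) simp
  then show "closedin T {x \<in> carrier G. proj k x \<in> C}"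
    by (simp only: eq)
qed

lemma normal_kernel_proj: "k \<in> I \<Longrightarrow> kernel G (H k) (proj k) \<lhd> G"
  by (rule group_hom.normal_kernel[OF group_hom_proj])

lemma openin_kernel_proj: "k \<in> I \<Longrightarrow> openin T (kernel G (H k) (proj k))"
  using openin_proj_preimage[of k "{\<one>\<^bsub>H k\<^esub>}"] by (simp add: kernel_def)

lemma eq_one_if_proj_eq_one:
  assumes x: "x \<in> carrier G" and one: "\<forall>k\<in>I. proj k x = \<one>\<^bsub>H k\<^esub>"
  shows "x = \<one>"
proof -
  have "f x k = f \<one> k" if "k \<in> I" for k
    using one that group_hom.hom_one[OF group_hom_proj[OF that]] by (simp add: proj_def)
  moreover have "f x \<in> (\<Pi>\<^sub>E i\<in>I. carrier (H i))" "f \<one> \<in> (\<Pi>\<^sub>E i\<in>I. carrier (H i))"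
    using f_in_inv_lim_carrier x one_closed unfolding inv_lim_carrier_def by auto
  ultimately have "f x = f \<one>"
    by (metis PiE_ext)
  then show ?thesis
    using f_bij x one_closed by (meson bij_betw_imp_inj_on inj_onD)
qed

text \<open>By compactness, finitely many kernels already separate the closed set carrier G - U
  from the identity; directedness puts a single kernel below all of them.\<close>
lemma kernel_proj_subset_nhd:
  assumes U: "openin T U" "\<one> \<in> U"
  shows "\<exists>k\<in>I. kernel G (H k) (proj k) \<subseteq> U"
proof -
  define V where "V i = {x \<in> carrier G. proj i x \<in> - {\<one>\<^bsub>H i\<^esub>}}" for i
  have "closedin T (carrier G - U)"
    using U(1) by (metis closedin_diff closedin_topspace topspace_eq)
  then have "compactin T (carrier G - U)"
    using compact_space_T closedin_compact_space by blast
  moreover have "carrier G - U \<subseteq> \<Union>(V ` I)"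
    using U(2) eq_one_if_proj_eq_one unfolding V_def by blast
  moreover have "\<forall>B\<in>V ` I. openin T B"
    unfolding V_def using openin_proj_preimage by blast
  ultimately obtain F where F: "finite F" "F \<subseteq> V ` I" "carrier G - U \<subseteq> \<Union>F"
    unfolding compactin_def by meson
  then obtain J where J: "J \<subseteq> I" "finite J" "F = V ` J"
    using finite_subset_image by meson
  obtain k where k: "k \<in> I" "\<forall>i\<in>J. rel i k"
    using finite_nilpotent_inverse_system_upper_bound[OF system J(2,1)] by blast
  have "x \<in> U" if x: "x \<in> kernel G (H k) (proj k)" for x
  proof (rule ccontr)
    assume "x \<notin> U"
    with x F J obtain i where i: "i \<in> J" "x \<in> V i"
      by (auto simp: kernel_def)
    then have "i \<in> I" using J by blast
    have "group_hom (H k) (H i) (\<phi> i k)"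
      using finite_nilpotent_inverse_systemD(5,8)[OF system] \<open>i \<in> I\<close> k i
      by (simp add: group_hom_def group_hom_axioms_def)
    then have "proj i x = \<one>\<^bsub>H i\<^esub>"
      using proj_compat[OF \<open>i \<in> I\<close> k(1)] k i x group_hom.hom_one by (fastforce simp: kernel_def)
    then show False
      using i unfolding V_def by simp
  qed
  then show ?thesis
    using k by blast
qed

lemma proj_tlcs_subset_lcs:
  assumes k: "k \<in> I"
  shows "proj k ` tlcs G T (Suc n) \<subseteq> lcs (H k) (Suc n)"
proof (induction n)
  case 0
  then show ?case using proj_carrier[OF k] by auto
next
  case (Suc n)
  interpret hk: group_hom G "H k" "proj k"
    by (rule group_hom_proj[OF k])
  let ?L = "lcs (H k) (Suc (Suc n))"
  let ?V = "{x \<in> carrier G. proj k x \<in> ?L}"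
  have "closed_subgroup G T ?V"
    unfolding closed_subgroup_def
    using hk.subgroup_preimage[OF hk.H.subgroup_lcs] closedin_proj_preimage[OF k] by blast
  moreover have "comm_set G (tlcs G T (Suc n)) \<subseteq> ?V"
  proof
    fix z assume "z \<in> comm_set G (tlcs G T (Suc n))"
    then obtain a h where a: "a \<in> tlcs G T (Suc n)" and h: "h \<in> carrier G"
      and z: "z = commutator G a h"
      unfolding comm_set_def by blast
    have ac: "a \<in> carrier G"
      using a tlcs_subset_carrier by blast
    have "proj k z = commutator (H k) (proj k a) (proj k h)"
      using z ac h by (simp add: commutator_def)
    moreover have "proj k a \<in> lcs (H k) (Suc n)" "proj k h \<in> carrier (H k)"
      using Suc.IH a proj_carrier[OF k h] by auto
    ultimately have "proj k z \<in> comm_set (H k) (lcs (H k) (Suc n))"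
      unfolding comm_set_def by blast
    then show "z \<in> ?V"
      using z ac h by (simp add: generate.incl)
  qed
  ultimately have "tlcs G T (Suc (Suc n)) \<subseteq> ?V"
    by (simp add: closed_generate_minimal)
  then show ?case by auto
qed

lemma tlcs_subset_kernel_proj:
  assumes k: "k \<in> I"
  shows "\<exists>n. tlcs G T (Suc n) \<subseteq> kernel G (H k) (proj k)"
proof -
  obtain n where "n \<ge> 1" "lcs (H k) n = {\<one>\<^bsub>H k\<^esub>}"
    using finite_nilpotent_inverse_systemD(7)[OF system k] unfolding nilpotent_group_def by blast
  then obtain m where "lcs (H k) (Suc m) = {\<one>\<^bsub>H k\<^esub>}"
    by (metis Suc_le_D One_nat_def)
  then have "tlcs G T (Suc m) \<subseteq> kernel G (H k) (proj k)"
    using proj_tlcs_subset_lcs[OF k, of m] tlcs_subset_carrier by (auto simp: kernel_def)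
  then show ?thesis ..
qed

theorem carrier_eq_ordered_set_prod:
  assumes Gs: "\<forall>j\<in>{1..t}. closed_subgroup G T (Gs j)"
    and gen: "\<forall>i\<ge>1. tlcs G T i = closed_generate G T (\<Union>j\<in>{1..t}. tlcs G T i \<inter> Gs j)"
  shows "carrier G = ordered_set_prod G Gs t"
proof -
  let ?P = "ordered_set_prod G Gs t"
  have "compactin T ?P"
    using Gs compact_space_T closedin_compact_space
    by (intro compactin_ordered_set_prod) (auto simp: closed_subgroup_def)
  then have P: "closedin T ?P"
    by (rule compactin_imp_closedin[OF Hausdorff_space_T])
  have "carrier G \<subseteq> ?P <#> U" if U: "openin T U" "\<one> \<in> U" for U
  proof -
    obtain k where k: "k \<in> I" and kU: "kernel G (H k) (proj k) \<subseteq> U"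
      using kernel_proj_subset_nhd[OF U] by blast
    let ?K = "kernel G (H k) (proj k)"
    obtain n where n: "tlcs G T (Suc n) \<subseteq> ?K"
      using tlcs_subset_kernel_proj[OF k] by blast
    have K: "subgroup ?K G"
      using normal_kernel_proj[OF k] by (rule normal_imp_subgroup)
    have "?P \<subseteq> carrier G"
      using closedin_subset[OF P] by (simp add: topspace_eq)
    have "carrier G \<subseteq> ?P <#> tlcs G T (Suc n) <#> ?K"
      using normal_kernel_proj[OF k] openin_kernel_proj[OF k] Gs gen
      by (rule carrier_subset_ordered_set_prod_tlcs)
    also have "\<dots> \<subseteq> ?P <#> ?K <#> ?K"
      using n by (intro mono_set_mult) auto
    also have "\<dots> = ?P <#> ?K"
      using \<open>?P \<subseteq> carrier G\<close> subgroup.subset[OF K]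
      by (simp add: set_mult_assoc subgroup_mult_id[OF K])
    also have "\<dots> \<subseteq> ?P <#> U"
      using kU by (intro mono_set_mult) auto
    finally show ?thesis .
  qed
  then have "carrier G \<subseteq> ?P"
    by (rule carrier_subset_if_closedin_dense[OF P])
  with closedin_subset[OF P] show ?thesis
    by (auto simp: topspace_eq)
qed

end

theorem lemma7p2:
  fixes G :: "('a, 'm) monoid_scheme" and T :: "'a topology"
    and Gs :: "nat \<Rightarrow> 'a set" and t :: nat
  assumes "pronilpotent G T TYPE('i) TYPE('b)"
    and "\<forall>j\<in>{1..t}. closed_subgroup G T (Gs j)"
    and "closed_generate G T (\<Union>j\<in>{1..t}. Gs j) = carrier G"
    and "\<forall>i\<ge>1. tlcs G T i = closed_generate G T (\<Union>j\<in>{1..t}. tlcs G T i \<inter> Gs j)"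
  shows "carrier G = ordered_set_prod G Gs t"
proof -
  from assms(1) obtain I :: "'i set" and rel and H :: "'i \<Rightarrow> 'b monoid" and \<phi> and f
    where "topological_group G T" "finite_nilpotent_inverse_system I rel H \<phi>"
      "bij_betw f (carrier G) (inv_lim_carrier I rel H \<phi>)"
      "\<forall>x\<in>carrier G. \<forall>y\<in>carrier G. f (x \<otimes>\<^bsub>G\<^esub> y) = (\<lambda>i\<in>I. f x i \<otimes>\<^bsub>H i\<^esub> f y i)"
      "homeomorphic_map T (inv_lim_topology I rel H \<phi>) f"
    unfolding pronilpotent_def is_inverse_limit_def by blast
  then have "inverse_limit_presentation G T I rel H \<phi> f"
    by (intro inverse_limit_presentation.intro top_group.intro
              inverse_limit_presentation_axioms.intro)
  \<comment> \<open>The generation hypothesis is the case i = 1 of the last one.\<close>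
  then show ?thesis
    using inverse_limit_presentation.carrier_eq_ordered_set_prod assms(2,4) by blast
qed

end
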